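(* Let $S$ be a numerical semigroup with minimal generating set $P$, $D=S^*+S^*$, and $G=G(S)=(V,E)$. Then $|V\cap D|\ge\deg(u)$ for every $u\in V\cap D$. Moreover, if $V\cap D=\{u\}$, then $N_G(u)=\{x\}$ for some $x\in V\cap P$, and $u=2x$.
   Context: A numerical semigroup is a subset $S\subseteq\mathbb N$ containing $0$, closed under addition, with finite complement; $S^*=S\setminus\{0\}$, $m=\min S^*$, $P=S^*\setminus D$. $X=\{s\in S^*: s-m\notin S\}$. The graph $G(S)$ has edge set all subsets $\{x,y\}\subseteq X$ ($x=y$ allowed) with $x+y\in X$, and vertex set $V$ the endvertices of these edges. $N_G(x)=\{y\in X: x+y\in X\}$ and $\deg(x)=|N_G(x)|$. *)

theory Defs
  imports Main
begin

definition numerical_semigroup :: "nat set \<Rightarrow> bool" where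
  "numerical_semigroup S \<longleftrightarrow> 0 \<in> S \<and> (\<forall>x\<in>S. \<forall>y\<in>S. x + y \<in> S) \<and> finite (UNIV - S)"

definition ns_star :: "nat set \<Rightarrow> nat set" where
  "ns_star S = S - {0}"

definition ns_D :: "nat set \<Rightarrow> nat set" where
  "ns_D S = {a + b | a b. a \<in> ns_star S \<and> b \<in> ns_star S}"

definition ns_P :: "nat set \<Rightarrow> nat set" where
  "ns_P S = ns_star S - ns_D S"

definition ns_mult :: "nat set \<Rightarrow> nat" where
  "ns_mult S = (LEAST s. s \<in> ns_star S)"

definition ns_X :: "nat set \<Rightarrow> nat set" where
  "ns_X S = {s \<in> ns_star S. s - ns_mult S \<notin> S}"

definition ns_N :: "nat set \<Rightarrow> nat \<Rightarrow> nat set" where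
  "ns_N S x = {y \<in> ns_X S. x + y \<in> ns_X S}"

definition ns_deg :: "nat set \<Rightarrow> nat \<Rightarrow> nat" where
  "ns_deg S x = card (ns_N S x)"

text \<open>Vertex set V of G(S): endvertices of edges {x,y} \<subseteq> X (x = y allowed) with x + y in X.\<close>
definition ns_V :: "nat set \<Rightarrow> nat set" where
  "ns_V S = {x \<in> ns_X S. \<exists>y \<in> ns_X S. x + y \<in> ns_X S}"

end

theory Submission
  imports Defs
begin

text \<open>
  Elements of \<open>X\<close> are closed under taking summands: if \<open>a + b \<in> X\<close> with \<open>a \<in> S\<^sup>*\<close>, \<open>b \<in> S\<close>,
  then \<open>a \<in> X\<close>, for otherwise \<open>a + b - m = (a - m) + b \<in> S\<close>. Hence, for \<open>u = a + b \<in> D\<close> and a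
  neighbour \<open>y\<close> of \<open>u\<close>, both \<open>b + y\<close> and \<open>a\<close> lie in \<open>X\<close> and \<open>(b + y) + a = u + y \<in> X\<close>, so
  \<open>b + y \<in> V \<inter> D\<close>. The injection \<open>y \<mapsto> b + y\<close> from \<open>N(u)\<close> into \<open>V \<inter> D\<close> gives the degree
  bound. If \<open>V \<inter> D = {u}\<close>, then \<open>b + y = u\<close> forces every neighbour to be \<open>a\<close> and, with the
  roles of \<open>a\<close> and \<open>b\<close> exchanged, to be \<open>b\<close>; so \<open>u = 2a\<close>, and \<open>a \<notin> D\<close> because \<open>a \<in> V\<close>
  and \<open>a \<noteq> u\<close>.
\<close>

lemma ns_mult_le: "s \<in> ns_star S \<Longrightarrow> ns_mult S \<le> s"
  unfolding ns_mult_def by (rule Least_le)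

lemma ns_X_subset_ns_star: "ns_X S \<subseteq> ns_star S"
  unfolding ns_X_def by blast

lemma finite_ns_X:
  assumes "numerical_semigroup S"
  shows "finite (ns_X S)"
proof -
  have "ns_X S \<subseteq> (\<lambda>g. g + ns_mult S) ` (UNIV - S)"
  proof
    fix s assume s: "s \<in> ns_X S"
    then have "ns_mult S \<le> s" using ns_mult_le ns_X_subset_ns_star by blast
    with s show "s \<in> (\<lambda>g. g + ns_mult S) ` (UNIV - S)"
      unfolding ns_X_def by (auto intro!: image_eqI[where x = "s - ns_mult S"])
  qed
  moreover have "finite (UNIV - S)" using assms unfolding numerical_semigroup_def by blast
  ultimately show ?thesis using finite_subset by blast
qed

lemma ns_X_summand:
  assumes "numerical_semigroup S" "a + b \<in> ns_X S" "a \<in> ns_star S" "b \<in> S"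
  shows "a \<in> ns_X S"
proof (rule ccontr)
  assume "a \<notin> ns_X S"
  with assms(3) have "a - ns_mult S \<in> S" unfolding ns_X_def by blast
  moreover have "a + b - ns_mult S = (a - ns_mult S) + b"
    using ns_mult_le[OF assms(3)] by simp
  ultimately have "a + b - ns_mult S \<in> S"
    using assms(1,4) unfolding numerical_semigroup_def by auto
  with assms(2) show False unfolding ns_X_def by blast
qed

lemma shifted_neighbour_in_ns_V_inter_ns_D:
  assumes "numerical_semigroup S" "a + b \<in> ns_X S" "a \<in> ns_star S" "b \<in> ns_star S"
    and "y \<in> ns_N S (a + b)"
  shows "b + y \<in> ns_V S \<inter> ns_D S"
proof -
  have yX: "y \<in> ns_X S" and sum_X: "(b + y) + a \<in> ns_X S"
    using assms(5) unfolding ns_N_def by (auto simp: ac_simps)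
  have y_star: "y \<in> ns_star S" using yX ns_X_subset_ns_star by blast
  have aX: "a \<in> ns_X S"
    using ns_X_summand[OF assms(1,2,3)] assms(4) unfolding ns_star_def by blast
  have "b + y \<in> ns_star S"
    using assms(1,4) y_star unfolding numerical_semigroup_def ns_star_def by auto
  moreover have "a \<in> S" using assms(3) unfolding ns_star_def by blast
  ultimately have "b + y \<in> ns_X S" using ns_X_summand[OF assms(1) sum_X] by blast
  with aX sum_X have "b + y \<in> ns_V S" unfolding ns_V_def by blast
  moreover have "b + y \<in> ns_D S" unfolding ns_D_def using assms(4) y_star by blast
  ultimately show ?thesis by blast
qed

lemma ns_deg_le_card_ns_V_inter_ns_D:
  assumes "numerical_semigroup S" "u \<in> ns_V S \<inter> ns_D S"
  shows "ns_deg S u \<le> card (ns_V S \<inter> ns_D S)"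
proof -
  obtain a b where ab: "u = a + b" "a \<in> ns_star S" "b \<in> ns_star S"
    using assms(2) unfolding ns_D_def by blast
  have "u \<in> ns_X S" using assms(2) unfolding ns_V_def by blast
  then have "(\<lambda>y. b + y) ` ns_N S u \<subseteq> ns_V S \<inter> ns_D S"
    using shifted_neighbour_in_ns_V_inter_ns_D[OF assms(1) _ ab(2,3)] ab(1) by blast
  moreover have "finite (ns_V S \<inter> ns_D S)"
    using finite_ns_X[OF assms(1)] unfolding ns_V_def by auto
  moreover have "inj_on (\<lambda>y. b + y) (ns_N S u)" by (simp add: inj_on_def)
  ultimately show ?thesis unfolding ns_deg_def by (metis card_inj_on_le)
qed

lemma ns_V_inter_ns_D_singleton:
  assumes "numerical_semigroup S" "ns_V S \<inter> ns_D S = {u}"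
  shows "\<exists>x \<in> ns_V S \<inter> ns_P S. ns_N S u = {x} \<and> u = 2 * x"
proof -
  have u: "u \<in> ns_V S \<inter> ns_D S" using assms(2) by blast
  then obtain a b where ab: "u = a + b" "a \<in> ns_star S" "b \<in> ns_star S"
    unfolding ns_D_def by blast
  have uX: "u \<in> ns_X S" using u unfolding ns_V_def by blast
  obtain y where y: "y \<in> ns_N S u" using u unfolding ns_V_def ns_N_def by blast
  have neighbour_eq_a: "z = a" if "z \<in> ns_N S u" for z
    using shifted_neighbour_in_ns_V_inter_ns_D[OF assms(1) _ ab(2,3)] that uX ab(1) assms(2)
    by auto
  have "a + y \<in> ns_V S \<inter> ns_D S"
    using shifted_neighbour_in_ns_V_inter_ns_D[OF assms(1) _ ab(3,2), of y] y uX ab(1)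
    by (simp add: add.commute)
  then have b_eq_a: "b = a" using assms(2) ab(1) neighbour_eq_a[OF y] by auto
  have N_u: "ns_N S u = {a}" using neighbour_eq_a y by blast
  have aX: "a \<in> ns_X S"
    using ns_X_summand[OF assms(1) _ ab(2)] uX ab(1,3) unfolding ns_star_def by blast
  have aV: "a \<in> ns_V S" unfolding ns_V_def using aX uX ab(1) b_eq_a by blast
  have "a \<noteq> u" using ab b_eq_a unfolding ns_star_def by auto
  then have "a \<notin> ns_D S" using aV assms(2) by blast
  then have aP: "a \<in> ns_P S" using ab(2) unfolding ns_P_def by blast
  show ?thesis using aV aP N_u ab(1) b_eq_a by auto
qed

theorem proposition4p15:
  fixes S :: "nat set"
  assumes "numerical_semigroup S"
  shows "(\<forall>u \<in> ns_V S \<inter> ns_D S. card (ns_V S \<inter> ns_D S) \<ge> ns_deg S u)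
       \<and> (\<forall>u. ns_V S \<inter> ns_D S = {u} \<longrightarrow>
             (\<exists>x \<in> ns_V S \<inter> ns_P S. ns_N S u = {x} \<and> u = 2 * x))"
  using ns_deg_le_card_ns_V_inter_ns_D[OF assms] ns_V_inter_ns_D_singleton[OF assms] by blast

end
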